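(* Let $\mathcal{H}\subset\mathbf{P}^3$ be the hyperbolic quadric over $\mathbf{F}_q$ with equation $x_0x_3-x_1x_2=0$, let $1\le s<q$, and let $X=\mathcal{H}\cap\mathcal{S}$ where $\mathcal{S}\subset\mathbf{P}^3$ is a surface of degree $s$ defined over $\mathbf{F}_q$ which does not contain $\mathcal{H}$. Then $$\sharp X(\mathbf{F}_q)\le 2s(q+1)-s^2,$$ and equality holds if and only if $X$ is (set-theoretically) the union of $s$ lines $\phi_s(\{a_1\}\times\mathbf{P}^1),\dots,\phi_s(\{a_s\}\times\mathbf{P}^1)$ and $s$ lines $\phi_s(\mathbf{P}^1\times\{b_1\}),\dots,\phi_s(\mathbf{P}^1\times\{b_s\})$, where $a_1,\dots,a_s$ are distinct points of $\mathbf{P}^1(\mathbf{F}_q)$ and $b_1,\dots,b_s$ are distinct points of $\mathbf{P}^1(\mathbf{F}_q)$.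
   Context: $\phi_s:\mathbf{P}^1\times\mathbf{P}^1\to\mathbf{P}^3$ is the Segre embedding $((u_0:v_0),(u_1:v_1))\mapsto(u_0u_1:u_0v_1:v_0u_1:v_0v_1)$, whose image is $\mathcal{H}$. $X(\mathbf{F}_q)$ denotes the set of $\mathbf{F}_q$-rational points of $X$. *)

theory Defs
  imports "HOL-Algebra.Algebraic_Closure_Type"
begin

type_synonym 'b pt4 = "'b \<times> 'b \<times> 'b \<times> 'b"
type_synonym expo = "nat \<times> nat \<times> nat \<times> nat"

definition mono_exps :: "nat \<Rightarrow> expo set" where
  "mono_exps s = {(i,j,k,l). i + j + k + l = s}"

text \<open>Evaluation of the homogeneous form of degree s with coefficients c (in the field 'a)
  at a point of 'b^4, where 'b is a field receiving 'a via the embedding f.\<close>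
definition hform_eval :: "('a \<Rightarrow> 'b::field) \<Rightarrow> nat \<Rightarrow> (expo \<Rightarrow> 'a) \<Rightarrow> 'b pt4 \<Rightarrow> 'b" where
  "hform_eval f s c x = (case x of (x0,x1,x2,x3) \<Rightarrow>
     (\<Sum>(i,j,k,l)\<in>mono_exps s. f (c (i,j,k,l)) * x0^i * x1^j * x2^k * x3^l))"

text \<open>Projective points: classes of nonzero vectors up to nonzero scalars.\<close>
definition proj3 :: "'b::field pt4 \<Rightarrow> 'b pt4 set" where
  "proj3 v = (case v of (a,b,c,d) \<Rightarrow> {(t*a,t*b,t*c,t*d) | t. t \<noteq> 0})"

definition proj1 :: "'b::field \<times> 'b \<Rightarrow> ('b \<times> 'b) set" where
  "proj1 v = (case v of (a,b) \<Rightarrow> {(t*a,t*b) | t. t \<noteq> 0})"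

definition P1 :: "('b::field \<times> 'b) set set" where
  "P1 = {proj1 v | v. v \<noteq> (0,0)}"

definition on_H :: "'b::field pt4 \<Rightarrow> bool" where
  "on_H v = (case v of (x0,x1,x2,x3) \<Rightarrow> x0*x3 - x1*x2 = 0)"

definition H_pts :: "'b::field pt4 set set" where
  "H_pts = {proj3 v | v. v \<noteq> (0,0,0,0) \<and> on_H v}"

definition S_pts :: "('a \<Rightarrow> 'b::field) \<Rightarrow> nat \<Rightarrow> (expo \<Rightarrow> 'a) \<Rightarrow> 'b pt4 set set" where
  "S_pts f s c = {proj3 v | v. v \<noteq> (0,0,0,0) \<and> hform_eval f s c v = 0}"

definition X_pts :: "('a \<Rightarrow> 'b::field) \<Rightarrow> nat \<Rightarrow> (expo \<Rightarrow> 'a) \<Rightarrow> 'b pt4 set set" where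
  "X_pts f s c = {proj3 v | v. v \<noteq> (0,0,0,0) \<and> on_H v \<and> hform_eval f s c v = 0}"

definition segre :: "'b::field \<times> 'b \<Rightarrow> 'b \<times> 'b \<Rightarrow> 'b pt4" where
  "segre p r = (case p of (u0,v0) \<Rightarrow> case r of (u1,v1) \<Rightarrow> (u0*u1, u0*v1, v0*u1, v0*v1))"

text \<open>Geometric points (over the algebraic closure of 'a) of the lines
  phi_s({a} x P^1) and phi_s(P^1 x {b}), for a, b in P^1('a).\<close>
definition line1 :: "('a::field \<times> 'a) set \<Rightarrow> 'a alg_closure pt4 set set" where
  "line1 a = {proj3 (segre (to_ac a0, to_ac a1) w) | a0 a1 w. (a0,a1) \<in> a \<and> w \<noteq> (0,0)}"

definition line2 :: "('a::field \<times> 'a) set \<Rightarrow> 'a alg_closure pt4 set set" where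
  "line2 b = {proj3 (segre w (to_ac b0, to_ac b1)) | b0 b1 w. (b0,b1) \<in> b \<and> w \<noteq> (0,0)}"

end

theory Submission
  imports Defs "HOL-Computational_Algebra.Polynomial"
begin

text \<open>
  Points of the hyperbolic quadric \<open>H: x0 x3 = x1 x2\<close> over a field are exactly the Segre images
  \<open>\<phi>(p,r)\<close> of pairs of points of \<open>P\<^sup>1\<close>, and pulling a form \<open>F\<close> of degree \<open>s\<close> back along \<open>\<phi>\<close>
  gives a bihomogeneous form \<open>G(p,r)\<close> of bidegree \<open>(s,s)\<close>.  So \<open>X(\<bbbF>\<^sub>q)\<close> is a set \<open>Z\<close> of
  pairs in \<open>P\<^sup>1(\<bbbF>\<^sub>q) \<times> P\<^sup>1(\<bbbF>\<^sub>q)\<close>, whose rows and columns are zero sets of binary forms of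
  degree \<open>s\<close>.  A nonzero binary form of degree \<open>s\<close> has at most \<open>s\<close> zeros; since \<open>s < q + 1\<close>,
  every row of \<open>Z\<close> is either full or has at most \<open>s\<close> points, and at most \<open>s\<close> rows are full
  (otherwise every column, over the algebraic closure, has more than \<open>s\<close> zeros, so \<open>H \<subseteq> S\<close>).
  Counting row by row gives \<open>|Z| \<le> s(q+1) + (q+1-s)s = 2s(q+1) - s\<^sup>2\<close>.  In case of equality
  there are exactly \<open>s\<close> full rows and (transposing) \<open>s\<close> full columns, and a further
  zero-counting argument shows that \<open>X\<close> is exactly the union of the corresponding \<open>2s\<close> lines;
  conversely such a union of lines has exactly that many rational points.
\<close>

text \<open>Normalised representatives of the points of \<open>P\<^sup>1\<close>: \<open>(1:x)\<close> and \<open>(0:1)\<close>.\<close>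
definition NS :: "('b::field \<times> 'b) set" where
  "NS = insert (0,1) (range (\<lambda>x. (1,x)))"

definition bform :: "nat \<Rightarrow> (nat \<Rightarrow> 'b::field) \<Rightarrow> 'b \<times> 'b \<Rightarrow> 'b" where
  "bform s g x = (case x of (u,v) \<Rightarrow> \<Sum>k\<le>s. g k * u^(s-k) * v^k)"

text \<open>A nonzero binary form of degree \<open>s\<close> has at most \<open>s\<close> zeros in \<open>P\<^sup>1\<close>: dehomogenising,
  its zeros \<open>(1:y)\<close> are the roots of a nonzero polynomial of degree \<open>\<le> s\<close>, and \<open>(0:1)\<close>
  is a zero only if that degree drops below \<open>s\<close>.\<close>
lemma bform_zeros:
  fixes g :: "nat \<Rightarrow> 'b::field"
  assumes "\<exists>k\<le>s. g k \<noteq> 0"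
  shows "finite {x\<in>NS. bform s g x = 0}" and "card {x\<in>NS. bform s g x = 0} \<le> s"
proof -
  define P where "P = (\<Sum>k\<le>s. monom (g k) k)"
  have coeff_P: "coeff P i = (if i \<le> s then g i else 0)" for i
    unfolding P_def by (simp add: coeff_sum coeff_monom)
  have "P \<noteq> 0" using assms coeff_P by (metis coeff_0)
  then have roots_fin: "finite {y. poly P y = 0}" and roots_card: "card {y. poly P y = 0} \<le> degree P"
    using poly_roots_finite card_poly_roots_bound by blast+
  have poly_P: "poly P y = bform s g (1,y)" for y
    unfolding P_def bform_def by (simp add: poly_sum poly_monom mult.commute)
  have at_infinity: "bform s g (0,1) = g s"
  proof -
    have "bform s g (0,1) = (\<Sum>k\<le>s. if k = s then g k else 0)"
      unfolding bform_def prod.case by (intro sum.cong) (auto simp: power_0_left)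
    thus ?thesis by simp
  qed
  have zeros: "{x\<in>NS. bform s g x = 0} =
      (if g s = 0 then {(0,1)} else {}) \<union> (\<lambda>y. (1,y)) ` {y. poly P y = 0}"
    unfolding NS_def using at_infinity poly_P by auto
  show "finite {x\<in>NS. bform s g x = 0}" unfolding zeros using roots_fin by simp
  have affine: "card ((\<lambda>y. (1::'b,y)) ` {y. poly P y = 0}) \<le> degree P"
    using card_image_le[OF roots_fin, of "\<lambda>y. (1::'b,y)"] roots_card by linarith
  have "degree P \<le> s" by (rule degree_le) (simp add: coeff_P)
  show "card {x\<in>NS. bform s g x = 0} \<le> s"
  proof (cases "g s = 0")
    case False
    thus ?thesis using affine \<open>degree P \<le> s\<close> unfolding zeros by simp
  next
    case True
    have "degree P \<le> s - 1"
    proof (rule degree_le, intro allI impI)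
      fix i assume "s - 1 < i"
      then have "i \<le> s \<Longrightarrow> i = s" by arith
      thus "coeff P i = 0" using True coeff_P by auto
    qed
    moreover have "s \<noteq> 0" using assms True by (metis le_zero_eq)
    moreover have "card {x\<in>NS. bform s g x = 0} \<le> 1 + card ((\<lambda>y. (1::'b,y)) ` {y. poly P y = 0})"
      unfolding zeros using True roots_fin by (simp add: card_insert_if)
    ultimately show ?thesis using affine by linarith
  qed
qed

lemma bform_zero_coeffs: "\<forall>k\<le>s. g k = 0 \<Longrightarrow> bform s g x = 0"
  unfolding bform_def by (auto split: prod.splits)

lemma bform_many_zeros:
  fixes g :: "nat \<Rightarrow> 'b::field"
  assumes "Z \<subseteq> NS" "finite Z" "s < card Z" "\<forall>x\<in>Z. bform s g x = 0"
  shows "\<forall>k\<le>s. g k = 0"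
proof (rule ccontr)
  assume "\<not> (\<forall>k\<le>s. g k = 0)"
  then have nonzero: "\<exists>k\<le>s. g k \<noteq> 0" by blast
  have "Z \<subseteq> {x\<in>NS. bform s g x = 0}" using assms(1,4) by blast
  then have "card Z \<le> card {x\<in>NS. bform s g x = 0}"
    by (rule card_mono[OF bform_zeros(1)[OF nonzero]])
  also have "\<dots> \<le> s" by (rule bform_zeros(2)[OF nonzero])
  finally show False using assms(3) by simp
qed

lemma card_rows_bound:
  fixes Z :: "('p \<times> 'p) set"
  assumes fin: "finite N" and s_less: "s < card N" and Z_sub: "Z \<subseteq> N \<times> N"
    and rows: "\<forall>p\<in>N. Z `` {p} = N \<or> card (Z `` {p}) \<le> s"
    and full: "card {p\<in>N. Z `` {p} = N} \<le> s"
  shows "card Z \<le> s * card N + (card N - s) * s"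
    and "card Z = s * card N + (card N - s) * s \<Longrightarrow> card {p\<in>N. Z `` {p} = N} = s"
proof -
  define V where "V = {p\<in>N. Z `` {p} = N}"
  define v where "v = card V"
  have "V \<subseteq> N" and "finite V" using fin unfolding V_def by auto
  have "Z = Sigma N (\<lambda>p. Z `` {p})" using Z_sub by auto
  moreover have "\<forall>p\<in>N. finite (Z `` {p})"
    using Z_sub fin by (auto intro: finite_subset[of _ N])
  ultimately have "card Z = (\<Sum>p\<in>N. card (Z `` {p}))"
    using fin card_SigmaI by metis
  also have "\<dots> = (\<Sum>p\<in>V. card (Z `` {p})) + (\<Sum>p\<in>N-V. card (Z `` {p}))"
    using \<open>V \<subseteq> N\<close> fin by (metis add.commute sum.subset_diff)
  also have "(\<Sum>p\<in>V. card (Z `` {p})) = (\<Sum>p\<in>V. card N)"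
    by (rule sum.cong) (simp_all add: V_def)
  also have "(\<Sum>p\<in>N-V. card (Z `` {p})) \<le> (\<Sum>p\<in>N-V. s)"
    by (rule sum_mono) (use rows in \<open>auto simp: V_def\<close>)
  finally have le: "card Z \<le> v * card N + (card N - v) * s"
    using card_Diff_subset[OF \<open>finite V\<close> \<open>V \<subseteq> N\<close>] by (simp add: v_def)
  have "v \<le> s" using full unfolding v_def V_def .
  then obtain d where d: "s = v + d" using le_Suc_ex by blast
  have "card N - v = (card N - s) + d" using d s_less by arith
  then have "(card N - v) * s = (card N - s) * s + d * s" by (simp add: add_mult_distrib)
  moreover have "s * card N = v * card N + d * card N" using d by (simp add: algebra_simps)
  moreover have "d * s \<le> d * card N" and "0 < d \<Longrightarrow> d * s < d * card N" using s_less by simp_all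
  ultimately have "card Z \<le> s * card N + (card N - s) * s"
    and "card Z = s * card N + (card N - s) * s \<Longrightarrow> v = s"
    using le d by linarith+
  then show "card Z \<le> s * card N + (card N - s) * s"
    and "card Z = s * card N + (card N - s) * s \<Longrightarrow> card {p\<in>N. Z `` {p} = N} = s"
    unfolding v_def V_def by blast+
qed

definition scale4 :: "'b::field \<Rightarrow> 'b pt4 \<Rightarrow> 'b pt4" where
  "scale4 t v = (case v of (a,b,c,d) \<Rightarrow> (t*a,t*b,t*c,t*d))"

lemma proj3_self: "v \<in> proj3 v"
  unfolding proj3_def by (cases v) (auto intro!: exI[of _ 1])

lemma proj3_memD: "w \<in> proj3 v \<Longrightarrow> \<exists>t. t \<noteq> 0 \<and> w = scale4 t v"
  unfolding proj3_def scale4_def by (auto split: prod.splits)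

lemma proj3_scale4:
  assumes "t \<noteq> 0"
  shows "proj3 (scale4 t v) = proj3 v"
proof -
  obtain a b c d where v: "v = (a,b,c,d)" by (cases v) auto
  show ?thesis unfolding proj3_def scale4_def v prod.case
  proof (intro equalityI subsetI)
    fix x assume "x \<in> {(u*(t*a), u*(t*b), u*(t*c), u*(t*d)) | u. u \<noteq> 0}"
    then obtain u where "u \<noteq> 0" "x = (u*(t*a), u*(t*b), u*(t*c), u*(t*d))" by blast
    then show "x \<in> {(u*a, u*b, u*c, u*d) | u. u \<noteq> 0}"
      using assms by (auto intro!: exI[of _ "u * t"] simp: mult_ac)
  next
    fix x assume "x \<in> {(u*a, u*b, u*c, u*d) | u. u \<noteq> 0}"
    then obtain u where "u \<noteq> 0" "x = (u*a, u*b, u*c, u*d)" by blast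
    then show "x \<in> {(u*(t*a), u*(t*b), u*(t*c), u*(t*d)) | u. u \<noteq> 0}"
      using assms by (auto intro!: exI[of _ "u / t"])
  qed
qed

lemma proj3_eqD: "proj3 v = proj3 w \<Longrightarrow> \<exists>t. t \<noteq> 0 \<and> w = scale4 t v"
  using proj3_self[of w] proj3_memD by blast

lemma hform_scale4: "hform_eval f s c (scale4 t v) = t^s * hform_eval f s c v"
proof -
  obtain a b c' d where v: "v = (a,b,c',d)" by (cases v) auto
  show ?thesis unfolding hform_eval_def scale4_def v prod.case sum_distrib_left
  proof (intro sum.cong refl)
    fix e assume "e \<in> mono_exps s"
    then obtain i j k l where e: "e = (i,j,k,l)" "i+j+k+l = s" unfolding mono_exps_def by auto
    have "t^s = t^i * t^j * t^k * t^l" using e by (simp add: power_add[symmetric])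
    then show "(case e of (i,j,k,l) \<Rightarrow> f (c (i,j,k,l)) * (t*a)^i * (t*b)^j * (t*c')^k * (t*d)^l) =
        t^s * (case e of (i,j,k,l) \<Rightarrow> f (c (i,j,k,l)) * a^i * b^j * c'^k * d^l)"
      unfolding e by (simp add: power_mult_distrib mult_ac)
  qed
qed

lemma hform_proj3_zero:
  "proj3 v = proj3 w \<Longrightarrow> hform_eval f s c v = 0 \<Longrightarrow> hform_eval f s c w = 0"
  using proj3_eqD hform_scale4 by (metis mult_zero_right)

lemma NS_nonzero: "p \<in> NS \<Longrightarrow> p \<noteq> (0,0)"
  unfolding NS_def by auto

lemma card_NS: "card (NS :: ('a::{finite,field} \<times> 'a) set) = card (UNIV :: 'a set) + 1"
proof -
  have "(0,1) \<notin> range (\<lambda>x::'a. (1::'a,x))" by auto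
  moreover have "card (range (\<lambda>x::'a. (1::'a,x))) = card (UNIV :: 'a set)"
    by (rule card_image) (auto simp: inj_on_def)
  ultimately show ?thesis unfolding NS_def by simp
qed

lemma segre_nonzero: "p \<noteq> (0,0) \<Longrightarrow> r \<noteq> (0,0) \<Longrightarrow> segre p r \<noteq> (0,0,0,0)"
  unfolding segre_def by (auto split: prod.splits)

lemma segre_on_H: "on_H (segre p r)"
  unfolding segre_def on_H_def by (auto split: prod.splits simp: mult_ac)

lemma on_H_segre:
  fixes v :: "'b::field pt4"
  assumes "v \<noteq> (0,0,0,0)" "on_H v"
  shows "\<exists>p\<in>NS. \<exists>r\<in>NS. \<exists>t. t \<noteq> 0 \<and> v = scale4 t (segre p r)"
proof -
  obtain x0 x1 x2 x3 where v: "v = (x0,x1,x2,x3)" by (cases v) auto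
  have quadric: "x0*x3 = x1*x2" using assms(2) unfolding v on_H_def by simp
  consider "x0 \<noteq> 0" | "x0 = 0" "x1 \<noteq> 0" | "x0 = 0" "x1 = 0" "x2 \<noteq> 0" | "x0 = 0" "x1 = 0" "x2 = 0"
    by blast
  then show ?thesis
  proof cases
    case 1
    then have "v = scale4 x0 (segre (1, x2/x0) (1, x1/x0))"
      unfolding v scale4_def segre_def using quadric by (auto simp: field_simps)
    then show ?thesis using 1 unfolding NS_def by blast
  next
    case 2
    then have "v = scale4 x1 (segre (1, x3/x1) (0,1))"
      unfolding v scale4_def segre_def using quadric by auto
    then show ?thesis using 2 unfolding NS_def by blast
  next
    case 3
    then have "v = scale4 x2 (segre (0,1) (1, x3/x2))"
      unfolding v scale4_def segre_def by auto
    then show ?thesis using 3 unfolding NS_def by blast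
  next
    case 4
    then have "x3 \<noteq> 0" and "v = scale4 x3 (segre (0,1) (0,1))"
      using assms(1) unfolding v scale4_def segre_def by auto
    then show ?thesis unfolding NS_def by blast
  qed
qed

definition segre_pt :: "('b::field \<times> 'b) \<times> ('b \<times> 'b) \<Rightarrow> 'b pt4 set" where
  "segre_pt = (\<lambda>(p,r). proj3 (segre p r))"

lemma inj_on_segre_pt: "inj_on segre_pt (NS \<times> NS)"
proof (rule inj_onI)
  fix x y :: "('b::field \<times> 'b) \<times> ('b \<times> 'b)"
  assume "x \<in> NS \<times> NS" "y \<in> NS \<times> NS" "segre_pt x = segre_pt y"
  obtain p r p' r' where xy: "x = (p,r)" "y = (p',r')" by (cases x, cases y) blast
  moreover obtain t where "t \<noteq> 0" "segre p' r' = scale4 t (segre p r)"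
    using proj3_eqD[of "segre p r" "segre p' r'"] \<open>segre_pt x = segre_pt y\<close>
    unfolding xy segre_pt_def by auto
  ultimately show "x = y"
    using \<open>x \<in> NS \<times> NS\<close> \<open>y \<in> NS \<times> NS\<close> unfolding NS_def segre_def scale4_def by auto
qed

lemma H_pts_segre: "H_pts = segre_pt ` (NS \<times> NS)"
proof (intro equalityI subsetI)
  fix x :: "'b::field pt4 set" assume "x \<in> H_pts"
  then obtain v where v: "x = proj3 v" "v \<noteq> (0,0,0,0)" "on_H v" unfolding H_pts_def by blast
  then obtain p r t where "p \<in> NS" "r \<in> NS" "t \<noteq> 0" "v = scale4 t (segre p r)"
    using on_H_segre by blast
  then have "(p,r) \<in> NS \<times> NS" and "x = segre_pt (p,r)"
    using v(1) proj3_scale4[of t] unfolding segre_pt_def by auto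
  then show "x \<in> segre_pt ` (NS \<times> NS)" by blast
next
  fix x :: "'b::field pt4 set" assume "x \<in> segre_pt ` (NS \<times> NS)"
  then obtain p r where "p \<in> NS" "r \<in> NS" "x = proj3 (segre p r)"
    unfolding segre_pt_def by auto
  then show "x \<in> H_pts"
    unfolding H_pts_def using segre_nonzero NS_nonzero segre_on_H by blast
qed

definition segre_form :: "('a \<Rightarrow> 'b::field) \<Rightarrow> nat \<Rightarrow> (expo \<Rightarrow> 'a) \<Rightarrow> 'b \<times> 'b \<Rightarrow> 'b \<times> 'b \<Rightarrow> 'b" where
  "segre_form f s c p r = hform_eval f s c (segre p r)"

definition zero_pairs :: "('a \<Rightarrow> 'b::field) \<Rightarrow> nat \<Rightarrow> (expo \<Rightarrow> 'a) \<Rightarrow> (('b \<times> 'b) \<times> ('b \<times> 'b)) set" where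
  "zero_pairs f s c = {(p,r) \<in> NS \<times> NS. segre_form f s c p r = 0}"

lemma mem_zero_pairs:
  "(p,r) \<in> zero_pairs f s c \<longleftrightarrow> p \<in> NS \<and> r \<in> NS \<and> segre_form f s c p r = 0"
  unfolding zero_pairs_def by simp

lemma zero_pairs_subset: "zero_pairs f s c \<subseteq> NS \<times> NS"
  unfolding zero_pairs_def by auto

lemma X_pts_segre: "X_pts f s c = segre_pt ` zero_pairs f s c"
proof (intro equalityI subsetI)
  fix x assume "x \<in> X_pts f s c"
  then obtain v where v: "x = proj3 v" "v \<noteq> (0,0,0,0)" "on_H v" "hform_eval f s c v = 0"
    unfolding X_pts_def by blast
  then obtain p r t where pr: "p \<in> NS" "r \<in> NS" "t \<noteq> 0" "v = scale4 t (segre p r)"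
    using on_H_segre by blast
  then have "x = proj3 (segre p r)" using v(1) proj3_scale4[of t] by simp
  moreover have "segre_form f s c p r = 0"
    using hform_proj3_zero[of v "segre p r"] v calculation unfolding segre_form_def by simp
  ultimately show "x \<in> segre_pt ` zero_pairs f s c"
    using pr unfolding zero_pairs_def segre_pt_def by force
next
  fix x assume "x \<in> segre_pt ` zero_pairs f s c"
  then obtain p r where "p \<in> NS" "r \<in> NS" "segre_form f s c p r = 0" "x = proj3 (segre p r)"
    unfolding zero_pairs_def segre_pt_def by auto
  then show "x \<in> X_pts f s c"
    unfolding X_pts_def segre_form_def using segre_nonzero NS_nonzero segre_on_H by blast
qed

lemma card_X_pts: "card (X_pts f s c) = card (zero_pairs f s c)"
  unfolding X_pts_segre
  by (rule card_image, rule inj_on_subset[OF inj_on_segre_pt]) (auto simp: zero_pairs_def)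

lemma H_pts_subset_S_pts:
  fixes f :: "'a \<Rightarrow> 'b::field"
  assumes "zero_pairs f s c = NS \<times> NS"
  shows "H_pts \<subseteq> S_pts f s c"
proof
  fix x :: "'b pt4 set" assume "x \<in> H_pts"
  then obtain p r where "(p,r) \<in> zero_pairs f s c" "x = proj3 (segre p r)"
    unfolding H_pts_segre assms segre_pt_def by auto
  then show "x \<in> S_pts f s c"
    unfolding S_pts_def zero_pairs_def segre_form_def using segre_nonzero NS_nonzero by blast
qed

lemma bform_regroup:
  fixes w :: "'e \<Rightarrow> 'b::field"
  assumes "finite E" "\<forall>e\<in>E. m e \<le> s"
  shows "(\<Sum>e\<in>E. w e * u^(s - m e) * v^(m e)) = bform s (\<lambda>k. \<Sum>e\<in>{e\<in>E. m e = k}. w e) (u,v)"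
proof -
  have "bform s (\<lambda>k. \<Sum>e\<in>{e\<in>E. m e = k}. w e) (u,v) =
      (\<Sum>k\<le>s. \<Sum>e\<in>{e\<in>E. m e = k}. w e * u^(s - m e) * v^(m e))"
    unfolding bform_def prod.case by (intro sum.cong refl) (auto simp: sum_distrib_right)
  also have "\<dots> = (\<Sum>e\<in>E. w e * u^(s - m e) * v^(m e))"
    by (rule sum.group) (use assms in auto)
  finally show ?thesis by simp
qed

lemma finite_mono_exps: "finite (mono_exps s)"
proof -
  have "mono_exps s \<subseteq> {..s} \<times> {..s} \<times> {..s} \<times> {..s}" unfolding mono_exps_def by auto
  then show ?thesis by (rule finite_subset) auto
qed

text \<open>For fixed \<open>p\<close>, \<open>r \<mapsto> F(\<phi>(p,r))\<close> is a binary form of degree \<open>s\<close> with coefficients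
  \<open>row_coeff f s c p\<close>: the monomial \<open>x0^i x1^j x2^k x3^l\<close> contributes to the coefficient of
  \<open>v^(j+l)\<close>.\<close>
definition row_coeff :: "('a \<Rightarrow> 'b::field) \<Rightarrow> nat \<Rightarrow> (expo \<Rightarrow> 'a) \<Rightarrow> 'b \<times> 'b \<Rightarrow> nat \<Rightarrow> 'b" where
  "row_coeff f s c p m =
     (\<Sum>e\<in>{e\<in>mono_exps s. (case e of (i,j,k,l) \<Rightarrow> j + l) = m}.
        case e of (i,j,k,l) \<Rightarrow> f (c e) * fst p^(i+j) * snd p^(k+l))"

lemma segre_form_row: "segre_form f s c p r = bform s (row_coeff f s c p) r"
proof -
  obtain p0 p1 where p: "p = (p0,p1)" by fastforce
  obtain u v where r: "r = (u,v)" by fastforce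
  have "segre_form f s c p r =
      (\<Sum>e\<in>mono_exps s. (case e of (i,j,k,l) \<Rightarrow> f (c e) * p0^(i+j) * p1^(k+l))
         * u^(s - (case e of (i,j,k,l) \<Rightarrow> j + l)) * v^(case e of (i,j,k,l) \<Rightarrow> j + l))"
    unfolding segre_form_def hform_eval_def segre_def p r prod.case
  proof (intro sum.cong refl)
    fix e assume "e \<in> mono_exps s"
    then obtain i j k l where e: "e = (i,j,k,l)" "i+j+k+l = s" unfolding mono_exps_def by auto
    then have "s - (j+l) = i + k" by simp
    then show "(case e of (i,j,k,l) \<Rightarrow> f (c (i,j,k,l)) * (p0*u)^i * (p0*v)^j * (p1*u)^k * (p1*v)^l)
        = (case e of (i,j,k,l) \<Rightarrow> f (c e) * p0^(i+j) * p1^(k+l))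
          * u^(s - (case e of (i,j,k,l) \<Rightarrow> j + l)) * v^(case e of (i,j,k,l) \<Rightarrow> j + l)"
      unfolding e by (simp add: power_mult_distrib power_add mult_ac)
  qed
  also have "\<dots> = bform s (row_coeff f s c p) r"
    unfolding row_coeff_def p r fst_conv snd_conv
    by (rule bform_regroup[OF finite_mono_exps, where m = "\<lambda>(i,j,k,l). j + l"])
       (auto simp: mono_exps_def)
  finally show ?thesis .
qed

text \<open>Exchanging the roles of \<open>x\<^sub>1\<close> and \<open>x\<^sub>2\<close> exchanges the two factors of \<open>P\<^sup>1 \<times> P\<^sup>1\<close>;
  this turns statements about rows into statements about columns.\<close>
definition transpose_coeffs :: "(expo \<Rightarrow> 'a) \<Rightarrow> expo \<Rightarrow> 'a" where
  "transpose_coeffs c = (\<lambda>(i,j,k,l). c (i,k,j,l))"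

lemma segre_form_transpose: "segre_form f s (transpose_coeffs c) p r = segre_form f s c r p"
proof -
  obtain p0 p1 where p: "p = (p0,p1)" by fastforce
  obtain r0 r1 where r: "r = (r0,r1)" by fastforce
  define swap where "swap = (\<lambda>(i::nat,j::nat,k::nat,l::nat). (i,k,j,l))"
  have "(\<Sum>(i,j,k,l)\<in>mono_exps s. f (c (i,j,k,l)) * (r0*p0)^i * (r0*p1)^j * (r1*p0)^k * (r1*p1)^l)
      = (\<Sum>(i,j,k,l)\<in>mono_exps s. f (c (i,k,j,l)) * (p0*r0)^i * (p0*r1)^j * (p1*r0)^k * (p1*r1)^l)"
    by (rule sum.reindex_bij_witness[where i=swap and j=swap])
       (auto simp: swap_def mono_exps_def mult_ac)
  then show ?thesis
    unfolding segre_form_def hform_eval_def segre_def transpose_coeffs_def p r prod.case by simp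
qed

definition embed2 :: "'a::field \<times> 'a \<Rightarrow> 'a alg_closure \<times> 'a alg_closure" where
  "embed2 p = (to_ac (fst p), to_ac (snd p))"

lemma embed2_NS: "p \<in> NS \<Longrightarrow> embed2 p \<in> NS"
  unfolding NS_def embed2_def by auto

lemma inj_embed2: "inj embed2"
  unfolding inj_def embed2_def by (auto simp: prod_eq_iff)

lemma row_coeff_embed2: "row_coeff to_ac s c (embed2 p) m = to_ac (row_coeff id s c p m)"
  unfolding row_coeff_def embed2_def to_ac_sum by (intro sum.cong refl) (auto split: prod.split)

lemma segre_form_embed2:
  "segre_form to_ac s c (embed2 p) (embed2 r) = to_ac (segre_form id s c p r)"
proof -
  have "row_coeff to_ac s c (embed2 p) = (\<lambda>k. to_ac (row_coeff id s c p k))"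
    by (rule ext) (rule row_coeff_embed2)
  then have "segre_form to_ac s c (embed2 p) (embed2 r) = bform s (\<lambda>k. to_ac (row_coeff id s c p k)) (embed2 r)"
    by (simp add: segre_form_row)
  then show ?thesis
    by (simp add: segre_form_row bform_def embed2_def to_ac_sum split: prod.splits)
qed

text \<open>The rows of \<open>X(\<bbbF>\<^sub>q)\<close> in Segre coordinates: a row is a line \<open>\<phi>({a} \<times> P\<^sup>1)\<close>, and the row
  of \<open>a\<close> is full iff that whole line lies in \<open>X(\<bbbF>\<^sub>q)\<close>.\<close>
definition vanishing_rows :: "nat \<Rightarrow> (expo \<Rightarrow> 'a::field) \<Rightarrow> ('a \<times> 'a) set" where
  "vanishing_rows s c = {p\<in>NS. \<forall>r\<in>NS. segre_form id s c p r = 0}"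

lemma zero_pairs_transpose: "zero_pairs f s (transpose_coeffs c) = prod.swap ` zero_pairs f s c"
  unfolding zero_pairs_def segre_form_transpose by auto

text \<open>Each row is either full or meets \<open>X\<close> in at most \<open>s\<close> points, since a nonzero binary form
  of degree \<open>s\<close> has at most \<open>s\<close> zeros.\<close>
lemma row_dichotomy:
  "(\<forall>r\<in>NS. segre_form f s c p r = 0) \<or> card {r\<in>NS. segre_form f s c p r = 0} \<le> s"
proof (cases "\<exists>k\<le>s. row_coeff f s c p k \<noteq> 0")
  case True
  then show ?thesis using bform_zeros(2) unfolding segre_form_row by blast
next
  case False
  then show ?thesis unfolding segre_form_row using bform_zero_coeffs by blast
qed

lemma row_many_zeros:
  assumes "Z \<subseteq> NS" "finite Z" "s < card Z" "\<forall>r\<in>Z. segre_form f s c p r = 0"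
  shows "segre_form f s c p r = 0"
proof -
  have "\<forall>r\<in>Z. bform s (row_coeff f s c p) r = 0" using assms(4) unfolding segre_form_row .
  then show ?thesis
    unfolding segre_form_row by (intro bform_zero_coeffs bform_many_zeros[OF assms(1-3)])
qed

lemma column_many_zeros:
  assumes "Z \<subseteq> NS" "finite Z" "s < card Z" "\<forall>p\<in>Z. segre_form f s c p r = 0"
  shows "segre_form f s c p r = 0"
  using row_many_zeros[of Z s f "transpose_coeffs c" r p] assms
  unfolding segre_form_transpose by blast

text \<open>Since \<open>s < q + 1 = |P\<^sup>1(\<bbbF>\<^sub>q)|\<close>, a full row over \<open>\<bbbF>\<^sub>q\<close> has vanishing coefficients, so the
  whole line \<open>\<phi>({a} \<times> P\<^sup>1)\<close> lies in \<open>X\<close> also over the algebraic closure.\<close>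
lemma vanishing_row_embed2:
  fixes c :: "expo \<Rightarrow> 'a::{field,finite}"
  assumes "s < card (UNIV :: 'a set)" "p \<in> vanishing_rows s c"
  shows "segre_form to_ac s c (embed2 p) r = 0"
proof -
  have "\<forall>k\<le>s. row_coeff id s c p k = 0"
    by (rule bform_many_zeros[of NS]) (use assms card_NS[where 'a='a] in
        \<open>auto simp: vanishing_rows_def segre_form_row\<close>)
  then show ?thesis
    unfolding segre_form_row by (intro bform_zero_coeffs) (simp add: row_coeff_embed2)
qed

text \<open>At most \<open>s\<close> rows are full unless \<open>S \<supseteq> H\<close>: more than \<open>s\<close> full rows would make every
  column of \<open>X\<close> over the algebraic closure vanish at more than \<open>s\<close> points.\<close>
lemma few_vanishing_rows:
  fixes c :: "expo \<Rightarrow> 'a::{field,finite}"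
  assumes "s < card (UNIV :: 'a set)" "zero_pairs to_ac s c \<noteq> NS \<times> NS"
  shows "card (vanishing_rows s c) \<le> s"
proof (rule ccontr)
  assume "\<not> card (vanishing_rows s c) \<le> s"
  moreover have "card (embed2 ` vanishing_rows s c) = card (vanishing_rows s c)"
    using card_image[OF inj_on_subset[OF inj_embed2 subset_UNIV]] .
  ultimately have many: "s < card (embed2 ` vanishing_rows s c)" by simp
  have "segre_form to_ac s c p r = 0" for p r
    by (rule column_many_zeros[OF _ _ many])
       (use vanishing_row_embed2[OF assms(1)] in \<open>auto simp: vanishing_rows_def embed2_NS\<close>)
  then have "zero_pairs to_ac s c = NS \<times> NS" unfolding zero_pairs_def by auto
  then show False using assms(2) by contradiction
qed

lemma zero_pairs_bound:
  fixes c :: "expo \<Rightarrow> 'a::{field,finite}"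
  defines "n \<equiv> card (UNIV :: 'a set) + 1"
  assumes "s < card (UNIV :: 'a set)" "zero_pairs to_ac s c \<noteq> NS \<times> NS"
  shows "card (zero_pairs id s c) \<le> s * n + (n - s) * s"
    and "card (zero_pairs id s c) = s * n + (n - s) * s \<Longrightarrow> card (vanishing_rows s c) = s"
proof -
  let ?Z = "zero_pairs id s c"
  have rows: "?Z `` {p} = {r\<in>NS. segre_form id s c p r = 0}" if "p \<in> NS" for p
    using that unfolding zero_pairs_def by auto
  then have full: "{p\<in>NS. ?Z `` {p} = NS} = vanishing_rows s c"
    unfolding vanishing_rows_def by auto
  have "card (NS :: ('a \<times> 'a) set) = n" unfolding n_def by (rule card_NS)
  moreover have "s < n" using assms(2) unfolding n_def by simp
  moreover have "finite (NS :: ('a \<times> 'a) set)" by simp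
  moreover have "?Z \<subseteq> NS \<times> NS" unfolding zero_pairs_def by auto
  moreover have "\<forall>p\<in>NS. ?Z `` {p} = NS \<or> card (?Z `` {p}) \<le> s"
    using row_dichotomy rows by fastforce
  moreover have "card {p\<in>NS. ?Z `` {p} = NS} \<le> s"
    unfolding full by (rule few_vanishing_rows[OF assms(2,3)])
  ultimately show "card ?Z \<le> s * n + (n - s) * s"
    and "card ?Z = s * n + (n - s) * s \<Longrightarrow> card (vanishing_rows s c) = s"
    using card_rows_bound[of NS s ?Z] unfolding full by auto
qed

lemma proj1_self: "v \<in> proj1 v"
  unfolding proj1_def by (cases v) (auto intro!: exI[of _ 1])

lemma proj1_memD: "w \<in> proj1 v \<Longrightarrow> \<exists>t. t \<noteq> 0 \<and> w = (t * fst v, t * snd v)"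
  unfolding proj1_def by (auto split: prod.splits)

lemma proj1_scale:
  assumes "t \<noteq> 0"
  shows "proj1 (t*a, t*b) = proj1 (a,b)"
proof (unfold proj1_def prod.case, intro equalityI subsetI)
  fix x assume "x \<in> {(u * (t*a), u * (t*b)) | u. u \<noteq> 0}"
  then obtain u where "u \<noteq> 0" "x = (u * (t*a), u * (t*b))" by blast
  then show "x \<in> {(u*a, u*b) | u. u \<noteq> 0}"
    using assms by (auto intro!: exI[of _ "u * t"] simp: mult_ac)
next
  fix x assume "x \<in> {(u*a, u*b) | u. u \<noteq> 0}"
  then obtain u where "u \<noteq> 0" "x = (u*a, u*b)" by blast
  then show "x \<in> {(u * (t*a), u * (t*b)) | u. u \<noteq> 0}"
    using assms by (auto intro!: exI[of _ "u / t"])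
qed

lemma NS_normalise:
  assumes "w \<noteq> (0,0)"
  shows "\<exists>t n. t \<noteq> 0 \<and> n \<in> NS \<and> w = (t * fst n, t * snd n)"
proof -
  obtain w0 w1 where w: "w = (w0,w1)" by fastforce
  show ?thesis
  proof (cases "w0 = 0")
    case True
    then have "w1 \<noteq> 0" and "w = (w1 * fst (0,1), w1 * snd (0,1))" using assms w by auto
    then show ?thesis unfolding NS_def by blast
  next
    case False
    then have "w = (w0 * fst (1, w1/w0), w0 * snd (1, w1/w0))" using w by simp
    then show ?thesis using False unfolding NS_def by blast
  qed
qed

lemma bij_betw_proj1_NS: "bij_betw proj1 NS P1"
proof (rule bij_betwI')
  fix n n' :: "'b::field \<times> 'b" assume "n \<in> NS" "n' \<in> NS"
  show "proj1 n = proj1 n' \<longleftrightarrow> n = n'"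
  proof
    assume "proj1 n = proj1 n'"
    then obtain t where "t \<noteq> 0" "n' = (t * fst n, t * snd n)"
      using proj1_self[of n'] proj1_memD by metis
    then show "n = n'" using \<open>n \<in> NS\<close> \<open>n' \<in> NS\<close> unfolding NS_def by auto
  qed simp
next
  fix n :: "'b::field \<times> 'b" assume "n \<in> NS"
  then show "proj1 n \<in> P1" unfolding P1_def using NS_nonzero by blast
next
  fix a :: "('b::field \<times> 'b) set" assume "a \<in> P1"
  then obtain w where "a = proj1 w" "w \<noteq> (0,0)" unfolding P1_def by blast
  then obtain t n where "t \<noteq> 0" "n \<in> NS" "a = proj1 (t * fst n, t * snd n)"
    using NS_normalise by blast
  then show "\<exists>n\<in>NS. a = proj1 n" using proj1_scale[of t "fst n" "snd n"] by auto
qed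

lemma P1_subset_normalised:
  assumes "A \<subseteq> P1"
  obtains A' where "A' \<subseteq> NS" "A = proj1 ` A'" "card A' = card A"
proof -
  define A' where "A' = {n\<in>NS. proj1 n \<in> A}"
  have "A' \<subseteq> NS" unfolding A'_def by auto
  have "proj1 ` NS = P1" by (rule bij_betw_imp_surj_on[OF bij_betw_proj1_NS])
  have "A \<subseteq> proj1 ` A'"
  proof
    fix x assume "x \<in> A"
    then obtain n where "n \<in> NS" "x = proj1 n" using assms \<open>proj1 ` NS = P1\<close> by blast
    then show "x \<in> proj1 ` A'" using \<open>x \<in> A\<close> unfolding A'_def by blast
  qed
  then have "A = proj1 ` A'" unfolding A'_def by auto
  moreover have "inj_on proj1 A'"
    using bij_betw_imp_inj_on[OF bij_betw_proj1_NS] \<open>A' \<subseteq> NS\<close> by (rule inj_on_subset)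
  ultimately have "card A' = card A" by (simp add: card_image)
  then show ?thesis using that \<open>A' \<subseteq> NS\<close> \<open>A = proj1 ` A'\<close> by blast
qed

lemma line1_segre:
  assumes "a \<in> NS"
  shows "line1 (proj1 a) = segre_pt ` ({embed2 a} \<times> NS)"
proof (intro equalityI subsetI)
  fix y assume "y \<in> line1 (proj1 a)"
  then obtain a0 a1 w where y: "y = proj3 (segre (to_ac a0, to_ac a1) w)" "(a0,a1) \<in> proj1 a"
      "w \<noteq> (0,0)"
    unfolding line1_def by blast
  obtain t where t: "t \<noteq> 0" "(a0,a1) = (t * fst a, t * snd a)" using proj1_memD[OF y(2)] by blast
  obtain t' n where n: "t' \<noteq> 0" "n \<in> NS" "w = (t' * fst n, t' * snd n)"
    using NS_normalise[OF y(3)] by blast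
  have "a0 = t * fst a" "a1 = t * snd a" using t(2) by auto
  then have "segre (to_ac a0, to_ac a1) w = scale4 (to_ac t) (scale4 t' (segre (embed2 a) n))"
    unfolding n(3) segre_def scale4_def embed2_def by (simp add: mult_ac split: prod.splits)
  then have "y = segre_pt (embed2 a, n)"
    using y(1) t(1) n(1) unfolding segre_pt_def by (simp add: proj3_scale4)
  then show "y \<in> segre_pt ` ({embed2 a} \<times> NS)" using n(2) by blast
next
  fix y assume "y \<in> segre_pt ` ({embed2 a} \<times> NS)"
  then obtain r where r: "r \<in> NS" "y = proj3 (segre (to_ac (fst a), to_ac (snd a)) r)"
    unfolding segre_pt_def embed2_def by auto
  obtain a0 a1 where a: "a = (a0,a1)" by fastforce
  have "(a0,a1) \<in> proj1 a" "r \<noteq> (0,0)" "y = proj3 (segre (to_ac a0, to_ac a1) r)"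
    using proj1_self[of a] a NS_nonzero[OF r(1)] r(2) by simp_all
  then show "y \<in> line1 (proj1 a)" unfolding line1_def by blast
qed

lemma line2_segre:
  assumes "b \<in> NS"
  shows "line2 (proj1 b) = segre_pt ` (NS \<times> {embed2 b})"
proof (intro equalityI subsetI)
  fix y assume "y \<in> line2 (proj1 b)"
  then obtain b0 b1 w where y: "y = proj3 (segre w (to_ac b0, to_ac b1))" "(b0,b1) \<in> proj1 b"
      "w \<noteq> (0,0)"
    unfolding line2_def by blast
  obtain t where t: "t \<noteq> 0" "(b0,b1) = (t * fst b, t * snd b)" using proj1_memD[OF y(2)] by blast
  obtain t' n where n: "t' \<noteq> 0" "n \<in> NS" "w = (t' * fst n, t' * snd n)"
    using NS_normalise[OF y(3)] by blast
  have "b0 = t * fst b" "b1 = t * snd b" using t(2) by auto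
  then have "segre w (to_ac b0, to_ac b1) = scale4 (to_ac t) (scale4 t' (segre n (embed2 b)))"
    unfolding n(3) segre_def scale4_def embed2_def by (simp add: mult_ac split: prod.splits)
  then have "y = segre_pt (n, embed2 b)"
    using y(1) t(1) n(1) unfolding segre_pt_def by (simp add: proj3_scale4)
  then show "y \<in> segre_pt ` (NS \<times> {embed2 b})" using n(2) by blast
next
  fix y assume "y \<in> segre_pt ` (NS \<times> {embed2 b})"
  then obtain p where p: "p \<in> NS" "y = proj3 (segre p (to_ac (fst b), to_ac (snd b)))"
    unfolding segre_pt_def embed2_def by auto
  obtain b0 b1 where b: "b = (b0,b1)" by fastforce
  have "(b0,b1) \<in> proj1 b" "p \<noteq> (0,0)" "y = proj3 (segre p (to_ac b0, to_ac b1))"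
    using proj1_self[of b] b NS_nonzero[OF p(1)] p(2) by simp_all
  then show "y \<in> line2 (proj1 b)" unfolding line2_def by blast
qed

lemma lines_segre:
  assumes "V \<subseteq> NS" "W \<subseteq> NS"
  shows "(\<Union>a\<in>proj1 ` V. line1 a) \<union> (\<Union>b\<in>proj1 ` W. line2 b) =
    segre_pt ` (embed2 ` V \<times> NS \<union> NS \<times> embed2 ` W)"
proof -
  have "(\<Union>a\<in>proj1 ` V. line1 a) = (\<Union>a\<in>V. segre_pt ` ({embed2 a} \<times> NS))"
    unfolding image_image by (intro SUP_cong refl line1_segre) (use assms(1) in blast)
  also have "\<dots> = segre_pt ` (embed2 ` V \<times> NS)" by blast
  moreover have "(\<Union>b\<in>proj1 ` W. line2 b) = (\<Union>b\<in>W. segre_pt ` (NS \<times> {embed2 b}))"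
    unfolding image_image by (intro SUP_cong refl line2_segre) (use assms(2) in blast)
  moreover have "\<dots> = segre_pt ` (NS \<times> embed2 ` W)" by blast
  ultimately show ?thesis by (simp add: image_Un)
qed

text \<open>Let \<open>V\<close> and \<open>W\<close> be \<open>s\<close> rows and \<open>s\<close> columns on which the pulled-back form vanishes
  identically, and suppose some row does not vanish identically.  Then every zero \<open>(p,r)\<close>
  lies on one of these lines: otherwise column \<open>r\<close> vanishes at \<open>p\<close> and on \<open>V\<close>, hence
  identically, and then every row vanishes at \<open>r\<close> and on \<open>W\<close>, hence identically.\<close>
lemma zeros_on_full_lines:
  assumes "V \<subseteq> NS" "finite V" "card V = s" and "W \<subseteq> NS" "finite W" "card W = s"
    and rows_V: "\<forall>a\<in>V. \<forall>r'. segre_form f s c a r' = 0"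
    and cols_W: "\<forall>b\<in>W. \<forall>p'. segre_form f s c p' b = 0"
    and nonzero_row: "\<not> (\<forall>r'. segre_form f s c a r' = 0)"
    and zero: "p \<in> NS" "r \<in> NS" "segre_form f s c p r = 0"
  shows "p \<in> V \<or> r \<in> W"
proof (rule ccontr)
  assume "\<not> (p \<in> V \<or> r \<in> W)"
  then have "p \<notin> V" "r \<notin> W" by auto
  have column_r: "segre_form f s c p' r = 0" for p'
  proof (rule column_many_zeros[of "insert p V"])
    show "insert p V \<subseteq> NS" "finite (insert p V)" using assms(1,2) zero(1) by auto
    show "s < card (insert p V)" using \<open>p \<notin> V\<close> assms(2,3) by simp
    show "\<forall>p'\<in>insert p V. segre_form f s c p' r = 0" using zero(3) rows_V by blast
  qed
  have "segre_form f s c a r' = 0" for r'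
  proof (rule row_many_zeros[of "insert r W"])
    show "insert r W \<subseteq> NS" "finite (insert r W)" using assms(4,5) zero(2) by auto
    show "s < card (insert r W)" using \<open>r \<notin> W\<close> assms(5,6) by simp
    show "\<forall>r'\<in>insert r W. segre_form f s c a r' = 0" using column_r cols_W by blast
  qed
  then show False using nonzero_row by blast
qed

text \<open>In case of equality there are \<open>s\<close> full rows \<open>V\<close> and \<open>s\<close> full columns \<open>W\<close> over \<open>\<bbbF>\<^sub>q\<close>;
  they vanish identically over the algebraic closure, while (as \<open>s < q + 1\<close>) some row does
  not.\<close>
lemma extremal_zero_pairs:
  fixes c :: "expo \<Rightarrow> 'a::{field,finite}" and s :: nat
  defines "V \<equiv> vanishing_rows s c" and "W \<equiv> vanishing_rows s (transpose_coeffs c)"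
  assumes s_less: "s < card (UNIV :: 'a set)" and "card V = s" "card W = s"
  shows "zero_pairs to_ac s c = embed2 ` V \<times> NS \<union> NS \<times> embed2 ` W"
proof -
  have "V \<subseteq> NS" "W \<subseteq> NS" unfolding V_def W_def vanishing_rows_def by auto
  then have V_NS: "embed2 ` V \<subseteq> NS" and W_NS: "embed2 ` W \<subseteq> NS" using embed2_NS by blast+
  have card_V: "card (embed2 ` V) = s" and card_W: "card (embed2 ` W) = s"
    using assms(4,5) by (simp_all add: card_image inj_on_subset[OF inj_embed2 subset_UNIV])
  have rows_V: "segre_form to_ac s c (embed2 a) r = 0" if "a \<in> V" for a r
    using vanishing_row_embed2[OF s_less] that unfolding V_def by blast
  have cols_W: "segre_form to_ac s c p (embed2 b) = 0" if "b \<in> W" for b p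
    using vanishing_row_embed2[OF s_less, of b "transpose_coeffs c" p] that
    unfolding W_def segre_form_transpose by blast
  have "\<not> NS \<subseteq> V"
  proof
    assume "NS \<subseteq> V"
    then have "card (NS :: ('a \<times> 'a) set) \<le> s" using card_mono[of V NS] assms(4) by simp
    then show False using s_less card_NS[where 'a='a] by simp
  qed
  then obtain a r0 where "r0 \<in> NS" "segre_form id s c a r0 \<noteq> 0"
    unfolding V_def vanishing_rows_def by blast
  then have "segre_form to_ac s c (embed2 a) (embed2 r0) \<noteq> 0"
    by (simp add: segre_form_embed2)
  then have nonzero_row: "\<not> (\<forall>r. segre_form to_ac s c (embed2 a) r = 0)" by blast
  have "\<forall>a\<in>embed2 ` V. \<forall>r. segre_form to_ac s c a r = 0"
    and "\<forall>b\<in>embed2 ` W. \<forall>p. segre_form to_ac s c p b = 0" using rows_V cols_W by blast+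
  then have "p \<in> embed2 ` V \<or> r \<in> embed2 ` W" if "(p,r) \<in> zero_pairs to_ac s c" for p r
    using zeros_on_full_lines[OF V_NS _ card_V W_NS _ card_W _ _ nonzero_row] that
    unfolding mem_zero_pairs by simp
  moreover have "embed2 ` V \<times> NS \<union> NS \<times> embed2 ` W \<subseteq> zero_pairs to_ac s c"
    using rows_V cols_W V_NS W_NS unfolding zero_pairs_def by auto
  ultimately show ?thesis unfolding zero_pairs_def by blast
qed

lemma extremal_configuration:
  fixes c :: "expo \<Rightarrow> 'a::{field,finite}"
  assumes "s < card (UNIV :: 'a set)" "card (vanishing_rows s c) = s"
    and "card (vanishing_rows s (transpose_coeffs c)) = s"
  shows "\<exists>A B. A \<subseteq> (P1 :: ('a \<times> 'a) set set) \<and> B \<subseteq> P1 \<and> card A = s \<and> card B = s \<and>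
    X_pts to_ac s c = (\<Union>a\<in>A. line1 a) \<union> (\<Union>b\<in>B. line2 b)"
proof -
  define V where "V = vanishing_rows s c"
  define W where "W = vanishing_rows s (transpose_coeffs c)"
  have "V \<subseteq> NS" "W \<subseteq> NS" unfolding V_def W_def vanishing_rows_def by auto
  have "X_pts to_ac s c = segre_pt ` (embed2 ` V \<times> NS \<union> NS \<times> embed2 ` W)"
    unfolding X_pts_segre V_def W_def using extremal_zero_pairs assms by metis
  also have "\<dots> = (\<Union>a\<in>proj1 ` V. line1 a) \<union> (\<Union>b\<in>proj1 ` W. line2 b)"
    using lines_segre[OF \<open>V \<subseteq> NS\<close> \<open>W \<subseteq> NS\<close>] by simp
  finally have "X_pts to_ac s c = (\<Union>a\<in>proj1 ` V. line1 a) \<union> (\<Union>b\<in>proj1 ` W. line2 b)" .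
  moreover have "proj1 ` V \<subseteq> P1" "proj1 ` W \<subseteq> P1"
    using bij_betw_imp_surj_on[OF bij_betw_proj1_NS] \<open>V \<subseteq> NS\<close> \<open>W \<subseteq> NS\<close> by auto
  moreover have "card (proj1 ` V) = s" "card (proj1 ` W) = s"
    using assms(2,3) card_image inj_on_subset[OF bij_betw_imp_inj_on[OF bij_betw_proj1_NS]]
      \<open>V \<subseteq> NS\<close> \<open>W \<subseteq> NS\<close> unfolding V_def W_def by metis+
  ultimately show ?thesis by blast
qed

lemma configuration_card:
  fixes c :: "expo \<Rightarrow> 'a::{field,finite}"
  defines "n \<equiv> card (UNIV :: 'a set) + 1"
  assumes "s < card (UNIV :: 'a set)"
    and "A \<subseteq> P1" "B \<subseteq> P1" "card A = s" "card B = s"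
    and X: "X_pts to_ac s c = (\<Union>a\<in>A. line1 a) \<union> (\<Union>b\<in>B. line2 b)"
  shows "card (zero_pairs id s c) = s * n + (n - s) * s"
proof -
  obtain A' where A': "A' \<subseteq> NS" "A = proj1 ` A'" "card A' = card A"
    by (rule P1_subset_normalised[OF assms(3)])
  obtain B' where B': "B' \<subseteq> NS" "B = proj1 ` B'" "card B' = card B"
    by (rule P1_subset_normalised[OF assms(4)])
  have image_eq: "segre_pt ` zero_pairs to_ac s c = segre_pt ` (embed2 ` A' \<times> NS \<union> NS \<times> embed2 ` B')"
    using X lines_segre[OF A'(1) B'(1)] unfolding X_pts_segre A'(2) B'(2) by simp
  have "embed2 ` A' \<subseteq> NS" "embed2 ` B' \<subseteq> NS" using A'(1) B'(1) embed2_NS by blast+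
  then have "embed2 ` A' \<times> NS \<union> NS \<times> embed2 ` B' \<subseteq> NS \<times> NS" by blast
  from inj_on_image_eq_iff[OF inj_on_segre_pt zero_pairs_subset[of to_ac s c] this] image_eq
  have closure: "zero_pairs to_ac s c = embed2 ` A' \<times> NS \<union> NS \<times> embed2 ` B'" by simp
  have "(p,r) \<in> zero_pairs id s c \<longleftrightarrow> (p,r) \<in> A' \<times> NS \<union> NS \<times> B'" for p r
  proof -
    have "(p,r) \<in> zero_pairs id s c \<longleftrightarrow>
        p \<in> NS \<and> r \<in> NS \<and> (embed2 p, embed2 r) \<in> zero_pairs to_ac s c"
      unfolding mem_zero_pairs segre_form_embed2 by (auto simp: embed2_NS)
    also have "\<dots> \<longleftrightarrow> p \<in> NS \<and> r \<in> NS \<and> (p \<in> A' \<or> r \<in> B')"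
      unfolding closure by (auto simp: inj_image_mem_iff[OF inj_embed2] embed2_NS)
    also have "\<dots> \<longleftrightarrow> (p,r) \<in> A' \<times> NS \<union> NS \<times> B'" using A'(1) B'(1) by blast
    finally show ?thesis .
  qed
  then have "zero_pairs id s c = A' \<times> NS \<union> NS \<times> B'" by auto
  moreover have "card (A' \<times> NS \<union> NS \<times> B') = s * n + n * s - s * s"
  proof -
    have NS: "finite (NS :: ('a \<times> 'a) set)" "card (NS :: ('a \<times> 'a) set) = n"
      unfolding n_def by (simp_all add: card_NS)
    moreover have "A' \<times> NS \<inter> NS \<times> B' = A' \<times> B'" using A'(1) B'(1) by blast
    moreover have "finite A'" "finite B'" using A'(1) B'(1) NS(1) finite_subset by blast+
    ultimately show ?thesis
      using card_Un_Int[of "A' \<times> NS" "NS \<times> B'"] A'(3) B'(3) assms(5,6)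
      by (simp add: card_cartesian_product)
  qed
  moreover have "s * n + n * s - s * s = s * n + (n - s) * s"
  proof -
    obtain d where "n = s + d" using assms(2) le_Suc_ex[of s n] unfolding n_def by fastforce
    then show ?thesis by (simp add: algebra_simps)
  qed
  ultimately show ?thesis by simp
qed

text \<open>Equality forces \<open>s\<close> full rows and, by the bound applied to the transposed form, \<open>s\<close> full
  columns.\<close>
lemma card_zero_pairs_eq_iff_lines:
  fixes c :: "expo \<Rightarrow> 'a::{field,finite}"
  defines "n \<equiv> card (UNIV :: 'a set) + 1"
  assumes s_less: "s < card (UNIV :: 'a set)" and nonzero: "zero_pairs to_ac s c \<noteq> NS \<times> NS"
  shows "card (zero_pairs id s c) = s * n + (n - s) * s \<longleftrightarrow>
    (\<exists>A B. A \<subseteq> (P1 :: ('a \<times> 'a) set set) \<and> B \<subseteq> P1 \<and> card A = s \<and> card B = s \<and>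
       X_pts to_ac s c = (\<Union>a\<in>A. line1 a) \<union> (\<Union>b\<in>B. line2 b))"
proof
  assume eq: "card (zero_pairs id s c) = s * n + (n - s) * s"
  have nonzero_T: "zero_pairs to_ac s (transpose_coeffs c) \<noteq> NS \<times> NS"
  proof
    assume "zero_pairs to_ac s (transpose_coeffs c) = NS \<times> NS"
    then have "prod.swap ` prod.swap ` zero_pairs to_ac s c = prod.swap ` (NS \<times> NS)"
      unfolding zero_pairs_transpose by simp
    then show False using nonzero by (simp add: image_image product_swap)
  qed
  have "card (zero_pairs id s (transpose_coeffs c)) = card (zero_pairs id s c)"
    unfolding zero_pairs_transpose by (simp add: card_image)
  then have "card (vanishing_rows s (transpose_coeffs c)) = s"
    using zero_pairs_bound(2)[OF s_less nonzero_T] eq unfolding n_def by simp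
  moreover have "card (vanishing_rows s c) = s"
    using zero_pairs_bound(2)[OF s_less nonzero] eq unfolding n_def by simp
  ultimately show "\<exists>A B. A \<subseteq> P1 \<and> B \<subseteq> P1 \<and> card A = s \<and> card B = s \<and>
      X_pts to_ac s c = (\<Union>a\<in>A. line1 a) \<union> (\<Union>b\<in>B. line2 b)"
    using extremal_configuration[OF s_less] by blast
next
  assume "\<exists>A B. A \<subseteq> (P1 :: ('a \<times> 'a) set set) \<and> B \<subseteq> P1 \<and> card A = s \<and> card B = s \<and>
      X_pts to_ac s c = (\<Union>a\<in>A. line1 a) \<union> (\<Union>b\<in>B. line2 b)"
  then show "card (zero_pairs id s c) = s * n + (n - s) * s"
    using configuration_card[OF s_less] unfolding n_def by blast
qed

lemma bound_as_int:
  assumes "s < n"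
  shows "int (s * n + (n - s) * s) = 2 * int s * int n - int s ^ 2"
proof -
  have "int (n - s) = int n - int s" using assms by simp
  then have "int (s * n + (n - s) * s) = int s * int n + (int n - int s) * int s"
    by (simp only: of_nat_add of_nat_mult)
  then show ?thesis by (simp add: power2_eq_square algebra_simps)
qed

theorem corollary2p3:
  fixes c :: "expo \<Rightarrow> 'a::{field,finite}" and s :: nat
  assumes "1 \<le> s" and "s < card (UNIV :: 'a set)"
    and "\<exists>e\<in>mono_exps s. c e \<noteq> 0"
    and "\<not> ((H_pts :: 'a alg_closure pt4 set set) \<subseteq> S_pts to_ac s c)"
  shows "int (card (X_pts id s c)) \<le> 2 * int s * (int (card (UNIV :: 'a set)) + 1) - int s ^ 2 \<and>
    (int (card (X_pts id s c)) = 2 * int s * (int (card (UNIV :: 'a set)) + 1) - int s ^ 2 \<longleftrightarrow>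
         (\<exists>A B. A \<subseteq> (P1 :: ('a \<times> 'a) set set) \<and> B \<subseteq> P1 \<and> card A = s \<and> card B = s \<and>
            X_pts to_ac s c = (\<Union>a\<in>A. line1 a) \<union> (\<Union>b\<in>B. line2 b)))"
proof -
  define n where "n = card (UNIV :: 'a set) + 1"
  have nonzero: "zero_pairs to_ac s c \<noteq> NS \<times> NS"
    using H_pts_subset_S_pts assms(4) by blast
  have bound: "card (zero_pairs id s c) \<le> s * n + (n - s) * s"
    using zero_pairs_bound(1)[OF assms(2) nonzero] unfolding n_def .
  note extremal = card_zero_pairs_eq_iff_lines[OF assms(2) nonzero, folded n_def]
  have bound_int: "int (s * n + (n - s) * s) = 2 * int s * (int (card (UNIV :: 'a set)) + 1) - int s ^ 2"
    using bound_as_int[of s n] assms(2) unfolding n_def by simp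
  show ?thesis
    unfolding card_X_pts bound_int[symmetric] of_nat_le_iff of_nat_eq_iff using bound extremal by blast
qed

end
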